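(* Let $f:(0,\infty)\to(0,\infty)$ be continuous with $f\in\mathrm{RV}_0(\beta)$ for some $\beta>1$, let $F(x)=\int_x^1\frac{du}{f(u)}$ and $F^{-1}$ its inverse. Let $\varphi:(0,\infty)\to(0,\infty)$ be continuous and strictly increasing with $\varphi(x)\to0$ as $x\to0^+$ and $\lim_{x\to0^+}f(x)/\varphi(x)=1$. Let $\theta>0$ and let $\gamma:(0,\infty)\to(0,\infty)$ be continuous, strictly decreasing, with $\gamma\in\mathrm{RV}_\infty(-\theta)$ and $\gamma(t)\to0$ as $t\to\infty$. If \[ \lim_{t\to\infty}\frac{f(F^{-1}(t))}{\gamma(t)}=0, \] then \[ \lim_{t\to\infty}\frac{\varphi^{-1}(\gamma(t))}{t\,\gamma(t)}=0. \]
   Context: $\mathrm{RV}_0(\beta)$: measurable positive $\varphi$ on $(0,\infty)$ with $\varphi(\lambda x)/\varphi(x)\to\lambda^\beta$ as $x\to0^+$ for every $\lambda>0$. $\mathrm{RV}_\infty(\alpha)$: measurable positive $h$ with $h(\lambda t)/h(t)\to\lambda^\alpha$ as $t\to\infty$ for every $\lambda>0$. *)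

theory Defs
  imports "HOL-Analysis.Analysis"
begin

definition RV_zero :: "real \<Rightarrow> (real \<Rightarrow> real) \<Rightarrow> bool" where
  "RV_zero \<beta> \<phi> \<longleftrightarrow>
     set_borel_measurable borel {0<..} \<phi> \<and> (\<forall>x>0. \<phi> x > 0) \<and>
     (\<forall>l>0. ((\<lambda>x. \<phi> (l * x) / \<phi> x) \<longlongrightarrow> l powr \<beta>) (at_right 0))"

definition RV_inf :: "real \<Rightarrow> (real \<Rightarrow> real) \<Rightarrow> bool" where
  "RV_inf \<alpha> h \<longleftrightarrow>
     set_borel_measurable borel {0<..} h \<and> (\<forall>t>0. h t > 0) \<and>
     (\<forall>l>0. ((\<lambda>t. h (l * t) / h t) \<longlongrightarrow> l powr \<alpha>) at_top)"

end

theory Submission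
  imports Defs
begin

text \<open>
  Since \<open>f \<sim> \<phi>\<close> with \<open>\<phi>\<close> increasing, \<open>f\<close> is increasing up to a factor 4 near 0, so \<open>1/f\<close> is
  bounded below on an interval by its value at the right end point. Integrating over \<open>[x, 2x]\<close>
  and using regular variation gives \<open>x \<le> K f(x) F(x)\<close>; as \<open>\<beta> > 1\<close>, \<open>x / f(x)\<close> is unbounded near 0,
  so \<open>F\<close> maps \<open>(0, 1]\<close> onto \<open>[0, \<infinity>)\<close>.
  Now let \<open>x = F^-1(t)\<close>, \<open>u = \<phi>^-1(\<gamma>(t))\<close> and \<open>L\<close> be large. Either \<open>u \<le> L x\<close>, or on \<open>[x, u/L]\<close>
  we have \<open>f \<le> 4 f(u/L) \<le> 8 L^-\<beta> f(u) \<le> 16 L^-\<beta> \<gamma>(t)\<close>, and the integral of \<open>1/f\<close> over this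
  interval, being at most \<open>t\<close>, bounds \<open>u/L - x\<close> by \<open>16 L^-\<beta> \<gamma>(t) t\<close>. Hence
  \<open>u / (t \<gamma>(t)) \<le> 16 L^(1-\<beta>) + L K f(x) / \<gamma>(t)\<close>: the first term is small as \<open>\<beta> > 1\<close>, and the
  second tends to 0 by hypothesis.
\<close>

text \<open>This replaces monotonicity of \<open>f\<close>, which is not assumed.\<close>

definition almost_increasing_at_0 :: "real \<Rightarrow> (real \<Rightarrow> real) \<Rightarrow> bool" where
  "almost_increasing_at_0 C f \<longleftrightarrow>
     (\<exists>\<delta>>0. \<forall>v w. 0 < v \<longrightarrow> v \<le> w \<longrightarrow> w < \<delta> \<longrightarrow> f v \<le> C * f w)"

section \<open>The primitive of \<open>1/f\<close>\<close>

lemma integral_reciprocal_ge: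
  fixes f :: "real \<Rightarrow> real"
  assumes cont: "continuous_on {a..b} f" and "a \<le> b" "0 < M"
    and bound: "\<And>v. v \<in> {a..b} \<Longrightarrow> 0 < f v \<and> f v \<le> M"
  shows "(b - a) / M \<le> integral {a..b} (\<lambda>u. 1 / f u)"
proof -
  have "continuous_on {a..b} (\<lambda>u. 1 / f u)"
    using bound by (intro continuous_on_divide continuous_on_const cont) force
  then have "integral {a..b} (\<lambda>u. 1 / M) \<le> integral {a..b} (\<lambda>u. 1 / f u)"
    using bound by (intro integral_le integrable_continuous_real) (auto simp: frac_le)
  with \<open>a \<le> b\<close> show ?thesis by simp
qed

definition recip_integral :: "(real \<Rightarrow> real) \<Rightarrow> real \<Rightarrow> real" where
  "recip_integral f x = (LBINT u=x..1. 1 / f u)"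

context
  fixes f :: "real \<Rightarrow> real"
  assumes f_cont: "continuous_on {0<..} f" and f_pos: "\<forall>x>0. 0 < f x"
begin

lemma continuous_on_reciprocal: "0 < a \<Longrightarrow> continuous_on {a..b} (\<lambda>u. 1 / f u)"
  using f_pos by (intro continuous_on_divide continuous_on_const continuous_on_subset[OF f_cont])
    (auto, metis less_le_trans order_less_irrefl)

lemma integral_reciprocal_nonneg: "0 < x \<Longrightarrow> 0 \<le> integral {x..y} (\<lambda>u. 1 / f u)"
  using f_pos continuous_on_reciprocal[of x y]
  by (intro integral_nonneg integrable_continuous_real) (auto simp: less_imp_le)

lemma recip_integral_eq_integral:
  assumes "0 < x" "x \<le> 1"
  shows "recip_integral f x = integral {x..1} (\<lambda>u. 1 / f u)"
  unfolding recip_integral_def one_ereal_def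
  using assms continuous_on_reciprocal[of x 1]
  by (intro interval_integral_eq_integral) (auto intro: borel_integrable_atLeastAtMost')

lemma recip_integral_nonpos:
  assumes "1 \<le> x"
  shows "recip_integral f x \<le> 0"
proof -
  have "recip_integral f x = - (LBINT u=ereal 1..ereal x. 1 / f u)"
    unfolding recip_integral_def one_ereal_def by (rule interval_integral_endpoints_reverse)
  also have "\<dots> = - integral {1..x} (\<lambda>u. 1 / f u)"
    using assms continuous_on_reciprocal[of 1 x]
    by (subst interval_integral_eq_integral) (auto intro: borel_integrable_atLeastAtMost')
  also have "\<dots> \<le> 0"
    using integral_reciprocal_nonneg[of 1 x] by simp
  finally show ?thesis .
qed

lemma recip_integral_split:
  assumes "0 < x" "x \<le> y" "y \<le> 1"
  shows "recip_integral f x = integral {x..y} (\<lambda>u. 1 / f u) + recip_integral f y"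
  using assms recip_integral_eq_integral[of x] recip_integral_eq_integral[of y]
    Henstock_Kurzweil_Integration.integral_combine[OF assms(2,3)
      integrable_continuous_real[OF continuous_on_reciprocal[OF assms(1)]]]
  by simp

lemma recip_integral_nonneg: "0 < x \<Longrightarrow> x \<le> 1 \<Longrightarrow> 0 \<le> recip_integral f x"
  using recip_integral_eq_integral integral_reciprocal_nonneg by simp

lemma recip_integral_antimono:
  "0 < x \<Longrightarrow> x \<le> y \<Longrightarrow> y \<le> 1 \<Longrightarrow> recip_integral f y \<le> recip_integral f x"
  using recip_integral_split integral_reciprocal_nonneg by fastforce

lemma recip_integral_ge:
  assumes "0 < x" "x \<le> y" "y \<le> 1" "0 < M" and bound: "\<And>v. v \<in> {x..y} \<Longrightarrow> f v \<le> M"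
  shows "(y - x) / M \<le> recip_integral f x"
proof -
  have "(y - x) / M \<le> integral {x..y} (\<lambda>u. 1 / f u)"
    using assms f_pos by (intro integral_reciprocal_ge continuous_on_subset[OF f_cont]) auto
  also have "\<dots> \<le> recip_integral f x"
    using assms recip_integral_split recip_integral_nonneg[of y] by simp
  finally show ?thesis .
qed

lemma continuous_on_recip_integral: "0 < a \<Longrightarrow> continuous_on {a..1} (recip_integral f)"
  using indefinite_integral_continuous_1'[OF integrable_continuous_real[OF continuous_on_reciprocal]]
  by (rule continuous_on_eq) (auto simp: recip_integral_eq_integral)

text \<open>
  \<open>recip_integral f\<close> need not be injective, so \<open>inv_into\<close> picks an arbitrary preimage; it lies
  in \<open>(0, 1]\<close> because \<open>recip_integral f \<le> 0\<close> on \<open>[1, \<infinity>)\<close>.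
\<close>

lemma recip_integral_inverse:
  assumes top: "filterlim (recip_integral f) at_top (at_right 0)" and "0 < t"
  shows "inv_into {0<..} (recip_integral f) t \<in> {0<..1}"
    and "recip_integral f (inv_into {0<..} (recip_integral f) t) = t"
proof -
  have "\<forall>\<^sub>F x in at_right (0::real). x < 1"
    unfolding eventually_at_right_field by (intro exI[of _ 1]) auto
  then have "\<forall>\<^sub>F x in at_right 0. t \<le> recip_integral f x \<and> 0 < x \<and> x < 1"
    using top[unfolded filterlim_at_top] eventually_at_right_less[of 0] by (intro eventually_conj) auto
  then obtain s where s: "0 < s" "s < 1" "t \<le> recip_integral f s"
    using eventually_happens'[OF trivial_limit_at_right_real] by blast
  moreover have "recip_integral f 1 = 0"
    using recip_integral_eq_integral[of 1] by simp
  ultimately obtain x where "s \<le> x" "x \<le> 1" "recip_integral f x = t"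
    using IVT2'[of "recip_integral f" 1 t s] continuous_on_recip_integral \<open>0 < t\<close> by force
  with s have t_image: "t \<in> recip_integral f ` {0<..}" by force
  then show inverse_eq: "recip_integral f (inv_into {0<..} (recip_integral f) t) = t"
    by (rule f_inv_into_f)
  have "\<not> 1 < inv_into {0<..} (recip_integral f) t"
    using recip_integral_nonpos[of "inv_into {0<..} (recip_integral f) t"] inverse_eq \<open>0 < t\<close>
    by linarith
  with inv_into_into[OF t_image] show "inv_into {0<..} (recip_integral f) t \<in> {0<..1}"
    by auto
qed

lemma recip_integral_inverse_tendsto_0:
  assumes top: "filterlim (recip_integral f) at_top (at_right 0)"
  shows "filterlim (inv_into {0<..} (recip_integral f)) (at_right 0) at_top"
proof -
  let ?X = "inv_into {0<..} (recip_integral f)"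
  have pos: "\<forall>\<^sub>F t in at_top. ?X t \<in> {0<..1} \<and> recip_integral f (?X t) = t"
    using eventually_gt_at_top[of 0] by eventually_elim (use recip_integral_inverse[OF top] in auto)
  have "\<forall>\<^sub>F t in at_top. ?X t < e" if "0 < e" for e
    using pos eventually_gt_at_top[of "max 0 (recip_integral f (min e 1))"]
  proof eventually_elim
    case (elim t)
    then show ?case
      using recip_integral_antimono[of "min e 1" "?X t"] \<open>0 < e\<close> by force
  qed
  then have "(?X \<longlongrightarrow> 0) at_top"
    using pos by (intro order_tendstoI) (auto elim: eventually_mono)
  then show ?thesis
    using pos by (intro tendsto_imp_filterlim_at_right) (auto elim: eventually_mono)
qed

lemma recip_integral_linear_lower_bound:
  assumes almost_incr: "almost_increasing_at_0 C f" and "0 < C" "0 < D"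
    and doubling: "\<forall>\<^sub>F x in at_right 0. f (2 * x) \<le> D * f x"
  shows "\<forall>\<^sub>F x in at_right 0. x \<le> C * D * f x * recip_integral f x"
proof -
  obtain \<delta> where "0 < \<delta>" and \<delta>: "\<And>v w. 0 < v \<Longrightarrow> v \<le> w \<Longrightarrow> w < \<delta> \<Longrightarrow> f v \<le> C * f w"
    using almost_incr unfolding almost_increasing_at_0_def by blast
  have "\<forall>\<^sub>F x in at_right 0. 0 < x \<and> 2 * x < min \<delta> 1"
    unfolding eventually_at_right_field using \<open>0 < \<delta>\<close> by (intro exI[of _ "min \<delta> 1 / 2"]) auto
  with doubling show ?thesis
  proof eventually_elim
    case (elim x)
    have "f v \<le> C * D * f x" if "v \<in> {x..2 * x}" for v
    proof -
      have "f v \<le> C * f (2 * x)"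
        using \<delta> that elim by auto
      also have "\<dots> \<le> C * D * f x"
        using elim \<open>0 < C\<close> by simp
      finally show ?thesis .
    qed
    then have "(2 * x - x) / (C * D * f x) \<le> recip_integral f x"
      using elim f_pos \<open>0 < C\<close> \<open>0 < D\<close> by (intro recip_integral_ge) auto
    then show ?case
      using elim f_pos \<open>0 < C\<close> \<open>0 < D\<close> by (simp add: divide_le_eq mult_ac)
  qed
qed

lemma recip_integral_tendsto_at_top:
  assumes "0 < K" and linear_bound: "\<forall>\<^sub>F x in at_right 0. x \<le> K * f x * recip_integral f x"
    and unbounded: "\<And>\<delta> T. 0 < \<delta> \<Longrightarrow> \<exists>x. 0 < x \<and> x < \<delta> \<and> T \<le> x / f x"
  shows "filterlim (recip_integral f) at_top (at_right 0)"
  unfolding filterlim_at_top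
proof
  fix T
  obtain \<delta> where "0 < \<delta>" and \<delta>: "\<And>x. 0 < x \<Longrightarrow> x < \<delta> \<Longrightarrow> x \<le> K * f x * recip_integral f x"
    using linear_bound unfolding eventually_at_right_field by auto
  obtain s where s: "0 < s" "s < min \<delta> 1" "K * T \<le> s / f s"
    using unbounded[of "min \<delta> 1" "K * T"] \<open>0 < \<delta>\<close> by auto
  have "s / f s \<le> K * recip_integral f s"
    using s \<delta>[of s] f_pos by (simp add: pos_divide_le_eq mult_ac)
  then have "K * T \<le> K * recip_integral f s"
    using s(3) by linarith
  then have "T \<le> recip_integral f s"
    using \<open>0 < K\<close> by simp
  then show "\<forall>\<^sub>F x in at_right 0. T \<le> recip_integral f x"
    unfolding eventually_at_right_field using s recip_integral_antimono
    by (intro exI[of _ s]) (auto intro: order_trans)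
qed

lemma recip_integral_ratio_le:
  assumes "0 < x" "0 < u" "0 < L" "u \<le> L" "0 < y" "0 < A" "0 < K"
    and t: "recip_integral f x = t" and linear_bound: "x \<le> K * f x * t"
    and bound: "\<And>v. x \<le> v \<Longrightarrow> v \<le> u / L \<Longrightarrow> f v \<le> A * y"
  shows "u / (t * y) \<le> L * A + L * K * (f x / y)"
proof -
  have "0 < K * f x"
    using \<open>0 < x\<close> \<open>0 < K\<close> f_pos by simp
  moreover have "0 < K * f x * t"
    using \<open>0 < x\<close> linear_bound by linarith
  ultimately have "0 < t"
    by (rule zero_less_mult_pos[rotated])
  have "u / L - x \<le> A * y * t"
  proof (cases "x \<le> u / L")
    case True
    then have "(u / L - x) / (A * y) \<le> t"
      using assms bound by (intro recip_integral_ge[of x "u / L", unfolded t]) auto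
    then show ?thesis
      using \<open>0 < A\<close> \<open>0 < y\<close> by (simp add: divide_le_eq mult_ac)
  next
    case False
    moreover have "0 \<le> A * y * t"
      using \<open>0 < A\<close> \<open>0 < y\<close> \<open>0 < t\<close> by simp
    ultimately show ?thesis
      by linarith
  qed
  then have "u \<le> L * (A * y * t) + L * x"
    using \<open>0 < L\<close> by (simp add: divide_le_eq algebra_simps)
  also have "\<dots> \<le> L * (A * y * t) + L * (K * f x * t)"
    using \<open>0 < L\<close> linear_bound by simp
  finally have "u \<le> L * A * y * t + L * K * f x * t"
    by (simp add: mult_ac)
  then have "u / (t * y) \<le> (L * A * y * t + L * K * f x * t) / (t * y)"
    using \<open>0 < t\<close> \<open>0 < y\<close> by (simp add: divide_right_mono)
  also have "\<dots> = L * A + L * K * (f x / y)"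
    using \<open>0 < t\<close> \<open>0 < y\<close> by (simp add: field_simps)
  finally show ?thesis .
qed

end

section \<open>Regular variation at 0\<close>

lemma RV_zero_eventually_le:
  assumes "RV_zero \<beta> f" "0 < l" "l powr \<beta> < M"
  shows "\<forall>\<^sub>F x in at_right 0. f (l * x) \<le> M * f x"
proof -
  have lim: "((\<lambda>x. f (l * x) / f x) \<longlongrightarrow> l powr \<beta>) (at_right 0)" and pos: "\<forall>x>0. 0 < f x"
    using assms(1,2) unfolding RV_zero_def by auto
  from order_tendstoD(2)[OF lim assms(3)] eventually_at_right_less show ?thesis
    by eventually_elim (use pos in \<open>auto simp: divide_less_eq\<close>)
qed

lemma RV_zero_eventually_div_le:
  assumes f_RV: "RV_zero \<beta> f" and "0 < L"
  shows "\<forall>\<^sub>F x in at_right 0. f (x / L) \<le> 2 * L powr (- \<beta>) * f x"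
proof -
  have "(1 / L) powr \<beta> < 2 * L powr (- \<beta>)"
    using \<open>0 < L\<close> by (simp add: powr_divide powr_minus_divide divide_strict_right_mono)
  from RV_zero_eventually_le[OF f_RV _ this] \<open>0 < L\<close> show ?thesis
    by simp
qed

lemma x_div_unbounded_at_right_0:
  fixes f :: "real \<Rightarrow> real"
  assumes f_pos: "\<forall>x>0. 0 < f x" and "0 < q" "q < 1/2"
    and halving: "\<forall>\<^sub>F x in at_right 0. f (x / 2) \<le> q * f x" and "0 < \<delta>"
  shows "\<exists>x. 0 < x \<and> x < \<delta> \<and> T \<le> x / f x"
proof -
  obtain d where "0 < d" and d: "\<And>x. 0 < x \<Longrightarrow> x < d \<Longrightarrow> f (x / 2) \<le> q * f x"
    using halving unfolding eventually_at_right_field by auto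
  define a where "a = min d \<delta> / 2"
  have a: "0 < a" "a < d" "a < \<delta>"
    using \<open>0 < d\<close> \<open>0 < \<delta>\<close> by (auto simp: a_def)
  define \<rho> where "\<rho> = 1 / (2 * q)" \<comment> \<open>growth factor of \<open>x / f x\<close> along \<open>a / 2\<^sup>k\<close>\<close>
  have "1 < \<rho>"
    using \<open>0 < q\<close> \<open>q < 1/2\<close> by (simp add: \<rho>_def)
  have growth: "\<rho> ^ k * (a / f a) \<le> (a / 2 ^ k) / f (a / 2 ^ k)" for k :: nat
  proof (induction k)
    case (Suc k)
    let ?s = "a / 2 ^ k"
    have s: "0 < ?s" "?s < d"
      using a by (auto simp: divide_le_eq one_le_power intro: le_less_trans[of _ a])
    have "\<rho> ^ Suc k * (a / f a) = \<rho> * (\<rho> ^ k * (a / f a))"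
      by simp
    also have "\<dots> \<le> \<rho> * (?s / f ?s)"
      using Suc.IH \<open>1 < \<rho>\<close> by (intro mult_left_mono) auto
    also have "\<dots> = (?s / 2) / (q * f ?s)"
      by (simp add: \<rho>_def)
    also have "\<dots> \<le> (?s / 2) / f (?s / 2)"
      using d[OF s] s f_pos \<open>0 < q\<close> by (intro divide_left_mono) auto
    finally show ?case
      by (simp add: mult_ac)
  qed simp
  have "0 < a / f a"
    using a f_pos by simp
  obtain k where "T / (a / f a) < \<rho> ^ k"
    using real_arch_pow[OF \<open>1 < \<rho>\<close>] by blast
  then have "T < \<rho> ^ k * (a / f a)"
    using \<open>0 < a / f a\<close> by (simp only: pos_divide_less_eq)
  then have "T \<le> (a / 2 ^ k) / f (a / 2 ^ k)"
    using growth[of k] by linarith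
  moreover have "0 < a / 2 ^ k" "a / 2 ^ k < \<delta>"
    using a by (auto simp: divide_le_eq one_le_power intro: le_less_trans[of _ a])
  ultimately show ?thesis
    by blast
qed

lemma RV_zero_x_div_unbounded_at_right_0:
  assumes f_RV: "RV_zero \<beta> f" and "1 < \<beta>" "0 < \<delta>"
  shows "\<exists>x. 0 < x \<and> x < \<delta> \<and> T \<le> x / f x"
proof -
  define q where "q = ((1/2) powr \<beta> + 1/2) / 2"
  have "(1/2::real) powr \<beta> < 1/2"
    using powr_less_mono'[of "1/2" 1 \<beta>] \<open>1 < \<beta>\<close> by simp
  then have q: "(1/2) powr \<beta> < q" "q < 1/2" "0 < q"
    by (auto simp: q_def add_pos_pos)
  then have "\<forall>\<^sub>F x in at_right 0. f (x / 2) \<le> q * f x"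
    using RV_zero_eventually_le[OF f_RV, of "1/2" q] by simp
  with q f_RV \<open>0 < \<delta>\<close> show ?thesis
    unfolding RV_zero_def by (intro x_div_unbounded_at_right_0) auto
qed

section \<open>Comparison with an increasing function\<close>

lemma ratio_tendsto_1_bounds:
  fixes f g :: "'a \<Rightarrow> real"
  assumes "((\<lambda>x. f x / g x) \<longlongrightarrow> 1) F" and "\<forall>\<^sub>F x in F. 0 < g x"
  shows "\<forall>\<^sub>F x in F. g x \<le> 2 * f x \<and> f x \<le> 2 * g x"
proof -
  have "\<forall>\<^sub>F x in F. 1/2 < f x / g x" "\<forall>\<^sub>F x in F. f x / g x < 2"
    using order_tendstoD(1)[OF assms(1), of "1/2"] order_tendstoD(2)[OF assms(1), of 2] by simp_all
  with assms(2) show ?thesis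
    by eventually_elim (auto simp: field_simps)
qed

lemma almost_increasing_at_0_if_ratio_tendsto_1:
  fixes f \<phi> :: "real \<Rightarrow> real"
  assumes "((\<lambda>x. f x / \<phi> x) \<longlongrightarrow> 1) (at_right 0)" "\<forall>x>0. 0 < \<phi> x"
    and mono: "strict_mono_on {0<..} \<phi>"
  shows "almost_increasing_at_0 4 f"
proof -
  have "\<forall>\<^sub>F x in at_right 0. \<phi> x \<le> 2 * f x \<and> f x \<le> 2 * \<phi> x"
    using assms(1,2) eventually_at_right_less[of "0::real"]
    by (intro ratio_tendsto_1_bounds) (auto elim: eventually_mono)
  then obtain \<delta> where "0 < \<delta>"
    and \<delta>: "\<And>x. 0 < x \<Longrightarrow> x < \<delta> \<Longrightarrow> \<phi> x \<le> 2 * f x \<and> f x \<le> 2 * \<phi> x"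
    unfolding eventually_at_right_field by auto
  have "f v \<le> 4 * f w" if "0 < v" "v \<le> w" "w < \<delta>" for v w
  proof -
    have "f v \<le> 2 * \<phi> v"
      using \<delta> that by auto
    also have "\<dots> \<le> 2 * \<phi> w"
      using strict_mono_on_leD[OF mono] that by simp
    also have "\<dots> \<le> 4 * f w"
      using \<delta>[of w] that by simp
    finally show ?thesis .
  qed
  with \<open>0 < \<delta>\<close> show ?thesis
    unfolding almost_increasing_at_0_def by blast
qed

lemma strict_mono_on_inverse_at_right_0:
  fixes \<phi> :: "real \<Rightarrow> real"
  assumes cont: "continuous_on {0<..} \<phi>" and pos: "\<forall>x>0. 0 < \<phi> x"
    and mono: "strict_mono_on {0<..} \<phi>" and lim: "(\<phi> \<longlongrightarrow> 0) (at_right 0)"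
  shows "\<forall>\<^sub>F y in at_right 0. 0 < inv_into {0<..} \<phi> y \<and> \<phi> (inv_into {0<..} \<phi> y) = y"
    and "filterlim (inv_into {0<..} \<phi>) (at_right 0) (at_right 0)"
proof -
  have "y \<in> \<phi> ` {0<..}" if y: "0 < y" "y < \<phi> 1" for y
  proof -
    have "\<forall>\<^sub>F x in at_right (0::real). x < 1"
      unfolding eventually_at_right_field by (intro exI[of _ 1]) auto
    with order_tendstoD(2)[OF lim \<open>0 < y\<close>] eventually_at_right_less
    have "\<forall>\<^sub>F x in at_right 0. \<phi> x < y \<and> 0 < x \<and> x < 1"
      by eventually_elim auto
    then obtain x0 where x0: "\<phi> x0 < y" "0 < x0" "x0 < 1"
      using eventually_happens'[OF trivial_limit_at_right_real] by blast
    moreover have "continuous_on {x0..1} \<phi>"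
      using x0 by (intro continuous_on_subset[OF cont]) auto
    ultimately obtain x where "x0 \<le> x" "x \<le> 1" "\<phi> x = y"
      using IVT'[of \<phi> x0 y 1] y by auto
    with x0 show ?thesis
      by force
  qed
  moreover have "\<forall>\<^sub>F y in at_right 0. 0 < y \<and> y < \<phi> 1"
    unfolding eventually_at_right_field using pos by (intro exI[of _ "\<phi> 1"]) auto
  ultimately have image: "\<forall>\<^sub>F y in at_right 0. y \<in> \<phi> ` {0<..}"
    by (auto elim: eventually_mono)
  then show inverse: "\<forall>\<^sub>F y in at_right 0. 0 < inv_into {0<..} \<phi> y \<and> \<phi> (inv_into {0<..} \<phi> y) = y"
  proof eventually_elim
    case (elim y)
    show ?case
      using inv_into_into[OF elim] f_inv_into_f[OF elim] by simp
  qed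
  have "\<forall>\<^sub>F y in at_right 0. inv_into {0<..} \<phi> y < e" if "0 < e" for e
  proof -
    have "\<forall>\<^sub>F y in at_right 0. y < \<phi> e"
      unfolding eventually_at_right_field using pos \<open>0 < e\<close> by (intro exI[of _ "\<phi> e"]) auto
    with inverse show ?thesis
    proof eventually_elim
      case (elim y)
      show ?case
      proof (rule ccontr)
        assume "\<not> inv_into {0<..} \<phi> y < e"
        then have "\<phi> e \<le> y"
          using strict_mono_on_leD[OF mono, of e "inv_into {0<..} \<phi> y"] elim \<open>0 < e\<close> by auto
        with elim show False
          by simp
      qed
    qed
  qed
  then have "(inv_into {0<..} \<phi> \<longlongrightarrow> 0) (at_right 0)"
    using inverse by (intro order_tendstoI) (auto elim: eventually_mono)
  then show "filterlim (inv_into {0<..} \<phi>) (at_right 0) (at_right 0)"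
    using inverse by (intro tendsto_imp_filterlim_at_right) (auto elim: eventually_mono)
qed

lemma ratio_tendsto_1_inverse_bound:
  fixes f \<phi> :: "real \<Rightarrow> real"
  assumes f_\<phi>: "((\<lambda>x. f x / \<phi> x) \<longlongrightarrow> 1) (at_right 0)"
    and cont: "continuous_on {0<..} \<phi>" and pos: "\<forall>x>0. 0 < \<phi> x"
    and mono: "strict_mono_on {0<..} \<phi>" and lim: "(\<phi> \<longlongrightarrow> 0) (at_right 0)"
  shows "\<forall>\<^sub>F y in at_right 0. f (inv_into {0<..} \<phi> y) \<le> 2 * y"
proof -
  note \<phi>_inverse = strict_mono_on_inverse_at_right_0[OF cont pos mono lim]
  have "\<forall>\<^sub>F x in at_right 0. 0 < \<phi> x"
    using eventually_at_right_less[of "0::real"] by eventually_elim (use pos in auto)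
  from ratio_tendsto_1_bounds[OF f_\<phi> this] have "\<forall>\<^sub>F x in at_right 0. f x \<le> 2 * \<phi> x"
    by eventually_elim auto
  from eventually_compose_filterlim[OF this \<phi>_inverse(2)] \<phi>_inverse(1) show ?thesis
    by eventually_elim auto
qed

section \<open>The ratio estimate\<close>

context
  fixes f \<gamma> X U :: "real \<Rightarrow> real" and \<beta> C K c :: real
  assumes f_cont: "continuous_on {0<..} f" and f_pos: "\<forall>x>0. 0 < f x"
    and f_RV: "RV_zero \<beta> f" and \<beta>_gt: "1 < \<beta>"
    and almost_incr: "almost_increasing_at_0 C f" and "0 < C"
    and linear_bound: "\<forall>\<^sub>F x in at_right 0. x \<le> K * f x * recip_integral f x" and "0 < K"
    and X_lim: "filterlim X (at_right 0) at_top"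
    and X_inverse: "\<And>t. 0 < t \<Longrightarrow> recip_integral f (X t) = t"
    and U_lim: "filterlim U (at_right 0) at_top"
    and U_bound: "\<forall>\<^sub>F t in at_top. f (U t) \<le> c * \<gamma> t" and "0 < c"
    and \<gamma>_pos: "\<forall>t>0. 0 < \<gamma> t"
begin

lemma eventually_inverse_ratio_le:
  assumes "1 \<le> L"
  shows "\<forall>\<^sub>F t in at_top. U t / (t * \<gamma> t) \<le> 2 * C * c * L powr (1 - \<beta>) + L * K * (f (X t) / \<gamma> t)"
proof -
  define M where "M = 2 * L powr (- \<beta>)"
  have "0 < M"
    using \<open>1 \<le> L\<close> by (simp add: M_def)
  have shrink: "\<forall>\<^sub>F x in at_right 0. f (x / L) \<le> M * f x"
    using RV_zero_eventually_div_le[OF f_RV] \<open>1 \<le> L\<close> by (simp add: M_def)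
  obtain \<delta> where "0 < \<delta>" and \<delta>: "\<And>v w. 0 < v \<Longrightarrow> v \<le> w \<Longrightarrow> w < \<delta> \<Longrightarrow> f v \<le> C * f w"
    using almost_incr unfolding almost_increasing_at_0_def by blast
  have small: "\<forall>\<^sub>F x in at_right 0. 0 < x \<and> x < min \<delta> 1"
    unfolding eventually_at_right_field using \<open>0 < \<delta>\<close> by (intro exI[of _ "min \<delta> 1"]) auto
  have X_ev: "\<forall>\<^sub>F t in at_top. 0 < X t \<and> X t \<le> K * f (X t) * recip_integral f (X t)"
    using eventually_compose_filterlim[OF eventually_conj[OF eventually_at_right_less linear_bound] X_lim] .
  have U_ev: "\<forall>\<^sub>F t in at_top. (0 < U t \<and> U t < min \<delta> 1) \<and> f (U t / L) \<le> M * f (U t)"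
    using eventually_compose_filterlim[OF eventually_conj[OF small shrink] U_lim] .
  from X_ev U_ev U_bound eventually_gt_at_top[of 0] show ?thesis
  proof eventually_elim
    case (elim t)
    then have "recip_integral f (X t) = t" "0 < \<gamma> t"
      using X_inverse \<gamma>_pos by auto
    have "U t / L \<le> U t"
      using elim \<open>1 \<le> L\<close> by (simp add: divide_le_eq mult_le_cancel_left1)
    have "f v \<le> (C * M * c) * \<gamma> t" if "X t \<le> v" "v \<le> U t / L" for v
    proof -
      have "f v \<le> C * f (U t / L)"
        using \<delta> that elim \<open>U t / L \<le> U t\<close> by auto
      also have "\<dots> \<le> C * (M * f (U t))"
        using elim \<open>0 < C\<close> by simp
      also have "\<dots> \<le> C * (M * (c * \<gamma> t))"
        using elim \<open>0 < C\<close> \<open>0 < M\<close> by simp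
      finally show ?thesis
        by (simp add: mult_ac)
    qed
    then have "U t / (t * \<gamma> t) \<le> L * (C * M * c) + L * K * (f (X t) / \<gamma> t)"
      using elim \<open>recip_integral f (X t) = t\<close> \<open>0 < \<gamma> t\<close> \<open>1 \<le> L\<close> \<open>0 < C\<close> \<open>0 < M\<close> \<open>0 < c\<close> \<open>0 < K\<close>
      by (intro recip_integral_ratio_le[OF f_cont f_pos]) auto
    also have "L * (C * M * c) = 2 * C * c * L powr (1 - \<beta>)"
      using \<open>1 \<le> L\<close> by (simp add: M_def powr_diff powr_minus_divide)
    finally show ?case .
  qed
qed

lemma inverse_ratio_tendsto_0:
  assumes hyp: "((\<lambda>t. f (X t) / \<gamma> t) \<longlongrightarrow> 0) at_top"
  shows "((\<lambda>t. U t / (t * \<gamma> t)) \<longlongrightarrow> 0) at_top"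
proof (rule order_tendstoI)
  have "\<forall>\<^sub>F t in at_top. 0 < U t / (t * \<gamma> t)"
    using eventually_compose_filterlim[OF eventually_at_right_less U_lim] eventually_gt_at_top[of 0]
    by eventually_elim (use \<gamma>_pos in simp)
  then show "\<forall>\<^sub>F t in at_top. a < U t / (t * \<gamma> t)" if "a < 0" for a
    by eventually_elim (use that in linarith)
  show "\<forall>\<^sub>F t in at_top. U t / (t * \<gamma> t) < \<epsilon>" if "0 < \<epsilon>" for \<epsilon>
  proof -
    have "((\<lambda>L. 2 * C * c * L powr (1 - \<beta>)) \<longlongrightarrow> 0) at_top"
      using \<beta>_gt by (intro tendsto_mult_right_zero tendsto_neg_powr filterlim_ident) auto
    then have "\<forall>\<^sub>F L in at_top. 2 * C * c * L powr (1 - \<beta>) < \<epsilon> / 2 \<and> 1 \<le> L"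
      using \<open>0 < \<epsilon>\<close> by (intro eventually_conj order_tendstoD(2) eventually_ge_at_top) auto
    then obtain L where L: "2 * C * c * L powr (1 - \<beta>) < \<epsilon> / 2" "1 \<le> L"
      using eventually_happens'[OF trivial_limit_at_top_linorder] by blast
    have "((\<lambda>t. L * K * (f (X t) / \<gamma> t)) \<longlongrightarrow> 0) at_top"
      using hyp by (rule tendsto_mult_right_zero)
    then have "\<forall>\<^sub>F t in at_top. L * K * (f (X t) / \<gamma> t) < \<epsilon> / 2"
      using \<open>0 < \<epsilon>\<close> by (intro order_tendstoD(2)) auto
    with eventually_inverse_ratio_le[OF L(2)] show ?thesis
      by eventually_elim (use L(1) in linarith)
  qed
qed

end

theorem mainTheorem11:
  fixes f \<phi> \<gamma> :: "real \<Rightarrow> real" and \<beta> \<theta> :: real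
  assumes f_cont: "continuous_on {0<..} f"
    and f_pos: "\<forall>x>0. f x > 0"
    and f_RV: "RV_zero \<beta> f"
    and \<beta>_gt: "\<beta> > 1"
  defines "F \<equiv> (\<lambda>x. LBINT u=x..1. 1 / f u)"
  assumes \<phi>_cont: "continuous_on {0<..} \<phi>"
    and \<phi>_pos: "\<forall>x>0. \<phi> x > 0"
    and \<phi>_mono: "strict_mono_on {0<..} \<phi>"
    and \<phi>_0: "(\<phi> \<longlongrightarrow> 0) (at_right 0)"
    and f_\<phi>: "((\<lambda>x. f x / \<phi> x) \<longlongrightarrow> 1) (at_right 0)"
    and \<theta>_pos: "\<theta> > 0"
    and \<gamma>_cont: "continuous_on {0<..} \<gamma>"
    and \<gamma>_pos: "\<forall>t>0. \<gamma> t > 0"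
    and \<gamma>_decr: "\<forall>s t. 0 < s \<longrightarrow> s < t \<longrightarrow> \<gamma> t < \<gamma> s"
    and \<gamma>_RV: "RV_inf (- \<theta>) \<gamma>"
    and \<gamma>_lim: "(\<gamma> \<longlongrightarrow> 0) at_top"
    and hyp: "((\<lambda>t. f (inv_into {0<..} F t) / \<gamma> t) \<longlongrightarrow> 0) at_top"
  shows "((\<lambda>t. inv_into {0<..} \<phi> (\<gamma> t) / (t * \<gamma> t)) \<longlongrightarrow> 0) at_top"
proof -
  have F_eq: "F = recip_integral f"
    by (simp add: F_def recip_integral_def fun_eq_iff)
  have almost_incr: "almost_increasing_at_0 4 f"
    using f_\<phi> \<phi>_pos \<phi>_mono by (rule almost_increasing_at_0_if_ratio_tendsto_1)
  have linear_bound: "\<forall>\<^sub>F x in at_right 0. x \<le> 4 * (2 powr \<beta> + 1) * f x * recip_integral f x"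
    using RV_zero_eventually_le[OF f_RV, of 2 "2 powr \<beta> + 1"]
    by (intro recip_integral_linear_lower_bound[OF f_cont f_pos almost_incr]) (auto intro: add_pos_pos)
  then have F_lim: "filterlim (recip_integral f) at_top (at_right 0)"
    using RV_zero_x_div_unbounded_at_right_0[OF f_RV \<beta>_gt]
    by (intro recip_integral_tendsto_at_top[OF f_cont f_pos _ linear_bound]) (auto intro: add_pos_pos)
  have \<gamma>_lim': "filterlim \<gamma> (at_right 0) at_top"
    using \<gamma>_pos by (intro tendsto_imp_filterlim_at_right[OF \<gamma>_lim]
        eventually_mono[OF eventually_gt_at_top[of 0]]) auto
  have U_lim: "filterlim (\<lambda>t. inv_into {0<..} \<phi> (\<gamma> t)) (at_right 0) at_top"
    using strict_mono_on_inverse_at_right_0(2)[OF \<phi>_cont \<phi>_pos \<phi>_mono \<phi>_0] \<gamma>_lim'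
    by (rule filterlim_compose)
  have U_bound: "\<forall>\<^sub>F t in at_top. f (inv_into {0<..} \<phi> (\<gamma> t)) \<le> 2 * \<gamma> t"
    using ratio_tendsto_1_inverse_bound[OF f_\<phi> \<phi>_cont \<phi>_pos \<phi>_mono \<phi>_0] \<gamma>_lim'
    by (rule eventually_compose_filterlim)
  show ?thesis
    using inverse_ratio_tendsto_0[OF f_cont f_pos f_RV \<beta>_gt almost_incr _ linear_bound _
        recip_integral_inverse_tendsto_0[OF f_cont f_pos F_lim]
        recip_integral_inverse(2)[OF f_cont f_pos F_lim] U_lim U_bound _ \<gamma>_pos hyp[unfolded F_eq]]
    by (simp add: add_pos_pos)
qed

end
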